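(* Let $\mathbb{K}$ be a field and $R=\mathbb{K}\langle x,y\rangle/(xy-1)$. Every left ideal of $R$ is of the form $\Sigma\oplus Rp(x)$, where $p(x)\in\mathbb{K}[x]\subseteq R$ is a polynomial in $x$ and $\Sigma$ is a left ideal of $R$ contained in the socle $I$ of $R$.
   Context: $R$ has $\mathbb{K}$-basis $\{y^ix^j: i,j\ge 0\}$. The socle of $R$ (as a left module) is the two-sided ideal $I=\langle 1-yx\rangle$; it equals $\bigoplus_{n\ge1}S_n$ where $S_n=Rf_n$ with $f_n=y^{n-1}x^{n-1}-y^nx^n$, and each $S_n$ is a simple left $R$-module isomorphic to $S_1$. *)

theory Defs
  imports "HOL-Computational_Algebra.Polynomial"
begin

text \<open>The Jacobson algebra R = K<x,y>/(xy - 1), realised on its K-basis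
  y^i x^j (indexed by the pair (i,j)). An element of R is a finitely supported
  function from basis indices to K.\<close>

definition jsupp :: "(nat \<times> nat \<Rightarrow> 'k::field) \<Rightarrow> (nat \<times> nat) set" where
  "jsupp f = {m. f m \<noteq> 0}"

definition Jcarrier :: "(nat \<times> nat \<Rightarrow> 'k::field) set" where
  "Jcarrier = {f. finite (jsupp f)}"

text \<open>Product of basis monomials: (y^i x^j)(y^k x^l), using x y = 1.\<close>
definition bmul :: "nat \<times> nat \<Rightarrow> nat \<times> nat \<Rightarrow> nat \<times> nat" where
  "bmul m n = (case m of (i, j) \<Rightarrow> case n of (k, l) \<Rightarrow>
      if j \<le> k then (i + k - j, l) else (i, l + j - k))"

definition jzero :: "nat \<times> nat \<Rightarrow> 'k::field" where
  "jzero = (\<lambda>_. 0)"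

definition jadd :: "(nat \<times> nat \<Rightarrow> 'k::field) \<Rightarrow> (nat \<times> nat \<Rightarrow> 'k) \<Rightarrow> (nat \<times> nat \<Rightarrow> 'k)" where
  "jadd f g = (\<lambda>m. f m + g m)"

definition jmul :: "(nat \<times> nat \<Rightarrow> 'k::field) \<Rightarrow> (nat \<times> nat \<Rightarrow> 'k) \<Rightarrow> (nat \<times> nat \<Rightarrow> 'k)" where
  "jmul f g = (\<lambda>a. \<Sum>(m, n) \<in> {(m, n). m \<in> jsupp f \<and> n \<in> jsupp g \<and> bmul m n = a}. f m * g n)"

definition left_ideal :: "(nat \<times> nat \<Rightarrow> 'k::field) set \<Rightarrow> bool" where
  "left_ideal L \<longleftrightarrow> L \<subseteq> Jcarrier \<and> jzero \<in> L \<and>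
     (\<forall>a\<in>L. \<forall>b\<in>L. jadd a b \<in> L) \<and>
     (\<forall>r\<in>Jcarrier. \<forall>a\<in>L. jmul r a \<in> L)"

definition minimal_left_ideal :: "(nat \<times> nat \<Rightarrow> 'k::field) set \<Rightarrow> bool" where
  "minimal_left_ideal L \<longleftrightarrow> left_ideal L \<and> L \<noteq> {jzero} \<and>
     (\<forall>L'. left_ideal L' \<and> L' \<subseteq> L \<longrightarrow> L' = {jzero} \<or> L' = L)"

text \<open>Socle of R as a left module: the sum of all minimal left ideals
  (= smallest left ideal containing all of them).\<close>
definition jsocle :: "(nat \<times> nat \<Rightarrow> 'k::field) set" where
  "jsocle = \<Inter>{J. left_ideal J \<and> (\<forall>L. minimal_left_ideal L \<longrightarrow> L \<subseteq> J)}"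

definition poly_in_x :: "'k::field poly \<Rightarrow> (nat \<times> nat \<Rightarrow> 'k)" where
  "poly_in_x p = (\<lambda>(i, j). if i = 0 then coeff p j else 0)"

definition principal_left :: "(nat \<times> nat \<Rightarrow> 'k::field) \<Rightarrow> (nat \<times> nat \<Rightarrow> 'k) set" where
  "principal_left a = {jmul r a | r. r \<in> Jcarrier}"

end

theory Submission
  imports Defs "HOL-Library.Poly_Mapping"
begin

text \<open>
  Write \<open>e = 1 - yx\<close>. Since \<open>xy = 1\<close>, \<open>e\<close> is an idempotent with \<open>xe = 0 = ey\<close>, the elements
  \<open>y\<^sup>i e x\<^sup>j\<close> are matrix units, \<open>1 = (\<Sum>i<N. y\<^sup>i e x\<^sup>i) + y\<^sup>N x\<^sup>N\<close>, and \<open>e R e = K e\<close>. Hence the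
  elements killed by some power of \<open>x\<close> form the sum of the minimal left ideals \<open>R e x\<^sup>k\<close>, so they
  lie in the socle; and for every \<open>f\<close>, some \<open>x\<^sup>N f\<close> lies in \<open>K[x]\<close>.

  Given a left ideal \<open>L\<close>, the polynomials \<open>p\<close> with \<open>p(x) \<in> L\<close> form an ideal of \<open>K[x]\<close>, generated
  by some \<open>q\<close>. If \<open>q = 0\<close>, then \<open>L\<close> is killed by powers of \<open>x\<close>. Otherwise let \<open>d = deg q\<close> and
  \<open>\<Sigma> = {s \<in> L. s y\<^sup>d x\<^sup>d = 0}\<close>. For \<open>f \<in> L\<close> with \<open>x\<^sup>N f = g q\<close>, the element \<open>f - y\<^sup>N g(x) q(x)\<close>
  is \<open>x\<close>-torsion, hence a combination \<open>\<Sum> y\<^sup>i e w\<^sub>i(x)\<close> with \<open>e w\<^sub>i(x) \<in> L\<close>; dividing each \<open>w\<^sub>i\<close> by \<open>q\<close>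
  leaves remainders of degree \<open>< d\<close>, which \<open>y\<^sup>d x\<^sup>d\<close> annihilates. Conversely \<open>e p(x) y\<^sup>d x\<^sup>d \<noteq> 0\<close>
  whenever \<open>deg p \<ge> d\<close>, which makes the sum \<open>\<Sigma> + R q(x)\<close> direct.
\<close>

section \<open>The Jacobson algebra as a monoid algebra\<close>

text \<open>\<open>B i j\<close> stands for the monomial \<open>y\<^sup>i x\<^sup>j\<close>. The bicyclic monoid is written additively so that
  \<open>bicyclic \<Rightarrow>\<^sub>0 'k\<close> is the monoid algebra, with its ring structure from \<open>Poly_Mapping\<close>.\<close>

datatype bicyclic = B nat nat

instantiation bicyclic :: monoid_add
begin

definition zero_bicyclic where "0 = B 0 0"

fun plus_bicyclic where
  "B i j + B k l = (if j \<le> k then B (i + k - j) l else B i (l + j - k))"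

instance
proof
  fix a b c :: bicyclic
  show "a + b + c = a + (b + c)"
    by (cases a; cases b; cases c) auto
  show "0 + a = a" by (cases a) (auto simp: zero_bicyclic_def)
  show "a + 0 = a" by (cases a) (auto simp: zero_bicyclic_def)
qed

end

type_synonym 'k jacobson = "bicyclic \<Rightarrow>\<^sub>0 'k"

definition jconst :: "'k::field \<Rightarrow> 'k jacobson" where
  "jconst c = Poly_Mapping.single 0 c"

definition jx :: "'k::field jacobson" where
  "jx = Poly_Mapping.single (B 0 1) 1"

definition jy :: "'k::field jacobson" where
  "jy = Poly_Mapping.single (B 1 0) 1"

definition je :: "'k::field jacobson" where
  "je = 1 - jy * jx"

lemma poly_mapping_sum_single:
  "f = (\<Sum>m\<in>Poly_Mapping.keys f. Poly_Mapping.single m (Poly_Mapping.lookup f m))"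
proof (rule poly_mapping_eqI)
  fix k
  have "Poly_Mapping.lookup (\<Sum>m\<in>Poly_Mapping.keys f. Poly_Mapping.single m (Poly_Mapping.lookup f m)) k
      = (\<Sum>m\<in>Poly_Mapping.keys f. if m = k then Poly_Mapping.lookup f m else 0)"
    unfolding lookup_sum by (auto simp: lookup_single when_def intro: sum.cong)
  also have "\<dots> = Poly_Mapping.lookup f k" by (simp add: in_keys_iff)
  finally show "Poly_Mapping.lookup f k =
      Poly_Mapping.lookup (\<Sum>m\<in>Poly_Mapping.keys f. Poly_Mapping.single m (Poly_Mapping.lookup f m)) k"
    by simp
qed

lemma bicyclic_poly_mapping_eqI:
  "(\<And>i j. Poly_Mapping.lookup f (B i j) = Poly_Mapping.lookup g (B i j)) \<Longrightarrow> f = g"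
  by (rule poly_mapping_eqI) (metis bicyclic.exhaust)

lemma jx_mult_jy: "jx * jy = (1::'k::field jacobson)"
  by (simp add: jx_def jy_def mult_single zero_bicyclic_def[symmetric])

lemma jy_power: "jy ^ i = (Poly_Mapping.single (B i 0) 1 :: 'k::field jacobson)"
  by (induction i) (simp_all add: jy_def mult_single zero_bicyclic_def[symmetric])

lemma jx_power: "jx ^ j = (Poly_Mapping.single (B 0 j) 1 :: 'k::field jacobson)"
  by (induction j) (simp_all add: jx_def mult_single zero_bicyclic_def[symmetric])

lemma jconst_mult_single: "jconst c * Poly_Mapping.single m d = Poly_Mapping.single m (c * d)"
  by (simp add: jconst_def mult_single)

lemma single_mult_jconst: "Poly_Mapping.single m d * jconst c = Poly_Mapping.single m (d * c)"
  by (simp add: jconst_def mult_single)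

lemma single_B_eq: "Poly_Mapping.single (B i j) c = (jconst c * (jy ^ i * jx ^ j) :: 'k::field jacobson)"
  by (simp add: jy_power jx_power jconst_def mult_single)

lemma jconst_commute: "jconst c * f = f * (jconst c :: 'k::field jacobson)"
proof -
  have "jconst c * f = (\<Sum>m\<in>Poly_Mapping.keys f. jconst c * Poly_Mapping.single m (Poly_Mapping.lookup f m))"
    by (subst poly_mapping_sum_single[of f]) (simp add: sum_distrib_left)
  also have "\<dots> = (\<Sum>m\<in>Poly_Mapping.keys f. Poly_Mapping.single m (Poly_Mapping.lookup f m) * jconst c)"
    by (simp add: jconst_mult_single single_mult_jconst mult.commute)
  also have "\<dots> = f * jconst c"
    by (subst (3) poly_mapping_sum_single[of f]) (simp add: sum_distrib_right)
  finally show ?thesis .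
qed

lemma mult_jconst_left_commute: "a * (jconst c * b) = jconst c * (a * (b::'k::field jacobson))"
  by (metis mult.assoc jconst_commute)

lemma jconst_mult: "jconst a * jconst b = (jconst (a * b) :: 'k::field jacobson)"
  by (simp add: jconst_def mult_single)

lemma jconst_0 [simp]: "jconst 0 = (0 :: 'k::field jacobson)"
  by (simp add: jconst_def)

lemma jconst_1 [simp]: "jconst 1 = (1 :: 'k::field jacobson)"
  by (simp add: jconst_def)

lemma lookup_jconst_mult:
  "Poly_Mapping.lookup (jconst c * f) k = c * Poly_Mapping.lookup (f :: 'k::field jacobson) k"
  by (simp add: jconst_def flip: mult_map_scale_conv_mult) (simp add: Poly_Mapping.map.rep_eq when_def)

section \<open>The idempotent \<open>e = 1 - yx\<close> and the matrix units\<close>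

lemma jx_mult_je: "jx * je = (0::'k::field jacobson)"
  by (simp add: je_def right_diff_distrib mult.assoc[symmetric] jx_mult_jy)

lemma je_mult_jy: "je * jy = (0::'k::field jacobson)"
  by (simp add: je_def left_diff_distrib mult.assoc jx_mult_jy)

lemma je_idem: "je * je = (je::'k::field jacobson)"
proof -
  have "je * je = je - je * jy * jx" by (simp add: je_def right_diff_distrib mult.assoc)
  then show ?thesis by (simp add: je_mult_jy)
qed

lemma jx_power_mult_jy_power: "jx ^ n * jy ^ n = (1::'k::field jacobson)"
proof (induction n)
  case (Suc n)
  have "jx ^ Suc n * jy ^ Suc n = (jx ^ n * (jx * jy) * jy ^ n :: 'k jacobson)"
    by (subst power_Suc2[of jx], subst power_Suc[of jy]) (simp only: mult.assoc)
  also have "\<dots> = 1" by (simp only: jx_mult_jy mult_1_right Suc.IH)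
  finally show ?case .
qed simp

lemma jx_power_mult_jy_power_le: "k \<le> d \<Longrightarrow> jx ^ k * jy ^ d = (jy ^ (d - k) :: 'k::field jacobson)"
proof -
  assume "k \<le> d"
  then have "jy ^ d = (jy ^ k * jy ^ (d - k) :: 'k jacobson)" by (simp flip: power_add)
  then show ?thesis by (simp add: mult.assoc[symmetric] jx_power_mult_jy_power)
qed

lemma jx_power_mult_jy_power_ge: "d \<le> k \<Longrightarrow> jx ^ k * jy ^ d = (jx ^ (k - d) :: 'k::field jacobson)"
proof -
  assume "d \<le> k"
  then have "jx ^ k = (jx ^ (k - d) * jx ^ d :: 'k jacobson)" by (simp flip: power_add)
  then show ?thesis by (simp add: mult.assoc jx_power_mult_jy_power)
qed

lemma jx_power_mult_je: "k > 0 \<Longrightarrow> jx ^ k * je = (0::'k::field jacobson)"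
  by (cases k) (simp_all add: power_Suc2 mult.assoc jx_mult_je del: power_Suc)

lemma je_mult_jy_power: "k > 0 \<Longrightarrow> je * jy ^ k = (0::'k::field jacobson)"
  by (cases k) (simp_all add: mult.assoc[symmetric] je_mult_jy)

lemma sum_matrix_units: "(\<Sum>i<N. jy ^ i * je * jx ^ i) + jy ^ N * jx ^ N = (1::'k::field jacobson)"
proof (induction N)
  case (Suc N)
  have "jy ^ N * jx ^ N = jy ^ N * (je + jy * jx) * (jx ^ N :: 'k jacobson)"
    by (simp add: je_def)
  also have "\<dots> = jy ^ N * je * jx ^ N + jy ^ Suc N * jx ^ Suc N"
    by (simp only: distrib_left distrib_right power_Suc2[of jy] power_Suc[of jx] mult.assoc)
  finally have step: "jy ^ N * jx ^ N = jy ^ N * je * jx ^ N + jy ^ Suc N * (jx ^ Suc N :: 'k jacobson)" .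
  show ?case
    by (simp only: sum.lessThan_Suc add.assoc Suc.IH flip: step)
qed simp

lemma je_mult_je: "je * m * je = jconst (Poly_Mapping.lookup m 0) * (je :: 'k::field jacobson)"
proof -
  have single: "je * Poly_Mapping.single k c * je = (if k = 0 then jconst c * je else 0)" for k c
  proof -
    obtain i j where k: "k = B i j" by (cases k)
    have "je * Poly_Mapping.single k c * je = jconst c * ((je * jy ^ i) * (jx ^ j * je))"
      by (simp only: k single_B_eq mult_jconst_left_commute mult.assoc jconst_commute[of c])
    then show ?thesis
      by (cases "i = 0"; cases "j = 0")
        (simp_all add: k je_mult_jy_power jx_power_mult_je zero_bicyclic_def je_idem)
  qed
  have "je * m * je = (\<Sum>k\<in>Poly_Mapping.keys m. je * Poly_Mapping.single k (Poly_Mapping.lookup m k) * je)"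
    by (subst poly_mapping_sum_single[of m]) (simp add: sum_distrib_left sum_distrib_right)
  also have "\<dots> = jconst (Poly_Mapping.lookup m 0) * je"
    by (simp add: single in_keys_iff)
  finally show ?thesis .
qed

lemma je_mult_jx_power:
  "je * jx ^ k = Poly_Mapping.single (B 0 k) 1 - (Poly_Mapping.single (B 1 (Suc k)) 1 :: 'k::field jacobson)"
proof -
  have "jy * (jx * jx ^ k) = (jy * jx ^ Suc k :: 'k jacobson)" by simp
  also have "\<dots> = Poly_Mapping.single (B 1 (Suc k)) 1" by (simp only: jx_power jy_def mult_single) simp
  finally show ?thesis
    by (simp add: je_def left_diff_distrib mult.assoc jx_power del: power_Suc)
qed

lemma lookup_je_mult_jx_power:
  "Poly_Mapping.lookup (je * jx ^ k :: 'k::field jacobson) (B 0 j) = (if j = k then 1 else 0)"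
  by (simp add: je_mult_jx_power lookup_minus lookup_single when_def)

lemma je_mult_jx_power_neq_0: "je * jx ^ k \<noteq> (0 :: 'k::field jacobson)"
  using lookup_je_mult_jx_power[of k k] by (metis lookup_zero one_neq_zero)

definition lideal :: "'a::ring_1 set \<Rightarrow> bool" where
  "lideal A \<longleftrightarrow> 0 \<in> A \<and> (\<forall>a\<in>A. \<forall>b\<in>A. a + b \<in> A) \<and> (\<forall>r. \<forall>a\<in>A. r * a \<in> A)"

lemma lideal_0: "lideal A \<Longrightarrow> 0 \<in> A"
  by (simp add: lideal_def)

lemma lideal_add: "lideal A \<Longrightarrow> a \<in> A \<Longrightarrow> b \<in> A \<Longrightarrow> a + b \<in> A"
  by (simp add: lideal_def)

lemma lideal_mult: "lideal A \<Longrightarrow> a \<in> A \<Longrightarrow> r * a \<in> A"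
  by (simp add: lideal_def)

lemma lideal_diff: "lideal A \<Longrightarrow> a \<in> A \<Longrightarrow> b \<in> A \<Longrightarrow> a - b \<in> A"
  using lideal_add[of A a "- b"] lideal_mult[of A b "- 1"] by simp

lemma lideal_sum: "lideal A \<Longrightarrow> (\<And>i. i \<in> I \<Longrightarrow> f i \<in> A) \<Longrightarrow> sum f I \<in> A"
  by (induction I rule: infinite_finite_induct) (simp_all add: lideal_0 lideal_add)

section \<open>Correspondence with the coordinate description\<close>

fun pair_of_bicyclic :: "bicyclic \<Rightarrow> nat \<times> nat" where
  "pair_of_bicyclic (B i j) = (i, j)"

definition bicyclic_of_pair :: "nat \<times> nat \<Rightarrow> bicyclic" where
  "bicyclic_of_pair m = B (fst m) (snd m)"

lemma pair_of_bicyclic_of_pair [simp]: "pair_of_bicyclic (bicyclic_of_pair m) = m"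
  by (cases m) (simp add: bicyclic_of_pair_def)

lemma bicyclic_of_pair_of_bicyclic [simp]: "bicyclic_of_pair (pair_of_bicyclic b) = b"
  by (cases b) (simp add: bicyclic_of_pair_def)

lemma bicyclic_of_pair_bmul: "bicyclic_of_pair (bmul u v) = bicyclic_of_pair u + bicyclic_of_pair v"
  by (cases u; cases v) (simp add: bmul_def bicyclic_of_pair_def)

definition to_jac :: "(nat \<times> nat \<Rightarrow> 'k::field) \<Rightarrow> 'k jacobson" where
  "to_jac f = Abs_poly_mapping (f \<circ> pair_of_bicyclic)"

definition of_jac :: "'k::field jacobson \<Rightarrow> (nat \<times> nat \<Rightarrow> 'k)" where
  "of_jac a = Poly_Mapping.lookup a \<circ> bicyclic_of_pair"

lemma lookup_to_jac:
  assumes "f \<in> Jcarrier"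
  shows "Poly_Mapping.lookup (to_jac f) = f \<circ> pair_of_bicyclic"
proof -
  have "{m. (f \<circ> pair_of_bicyclic) m \<noteq> 0} = bicyclic_of_pair ` jsupp f"
    by (auto simp: jsupp_def image_iff) (metis bicyclic_of_pair_of_bicyclic prod.collapse)
  then have "finite {m. (f \<circ> pair_of_bicyclic) m \<noteq> 0}" using assms by (simp add: Jcarrier_def)
  then show ?thesis by (simp add: to_jac_def)
qed

lemma jsupp_of_jac: "jsupp (of_jac a) = pair_of_bicyclic ` Poly_Mapping.keys a"
  by (auto simp: jsupp_def of_jac_def in_keys_iff image_iff)
    (metis in_keys_iff pair_of_bicyclic_of_pair)

lemma of_jac_in_Jcarrier: "of_jac a \<in> Jcarrier"
  by (simp add: Jcarrier_def jsupp_of_jac)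

lemma to_jac_of_jac [simp]: "to_jac (of_jac a) = a"
  by (rule poly_mapping_eqI) (simp add: lookup_to_jac[OF of_jac_in_Jcarrier], simp add: of_jac_def)

lemma of_jac_to_jac [simp]: "f \<in> Jcarrier \<Longrightarrow> of_jac (to_jac f) = f"
  by (simp add: of_jac_def lookup_to_jac fun_eq_iff)

lemma inj_of_jac: "inj of_jac"
  by (metis injI to_jac_of_jac)

lemma of_jac_image_to_jac_image: "A \<subseteq> Jcarrier \<Longrightarrow> of_jac ` to_jac ` A = A"
  by (force simp: image_image)

lemma of_jac_add: "of_jac (a + b) = jadd (of_jac a) (of_jac b)"
  by (simp add: of_jac_def jadd_def lookup_add fun_eq_iff)

lemma of_jac_0: "of_jac 0 = jzero"
  by (simp add: of_jac_def jzero_def fun_eq_iff)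

lemma lookup_mult_eq_sum_keys:
  "Poly_Mapping.lookup (a * b) k =
    (\<Sum>m\<in>Poly_Mapping.keys a. \<Sum>n\<in>Poly_Mapping.keys b.
       if m + n = k then Poly_Mapping.lookup a m * Poly_Mapping.lookup b n else 0)"
  for a b :: "'a::monoid_add \<Rightarrow>\<^sub>0 'b::semiring_0"
proof -
  have "a * b = (\<Sum>m\<in>Poly_Mapping.keys a. \<Sum>n\<in>Poly_Mapping.keys b.
      Poly_Mapping.single (m + n) (Poly_Mapping.lookup a m * Poly_Mapping.lookup b n))"
    by (subst poly_mapping_sum_single[of a], subst poly_mapping_sum_single[of b])
       (simp add: sum_distrib_left sum_distrib_right mult_single, rule sum.swap)
  then show ?thesis
    by (simp add: lookup_sum lookup_single when_def)
qed

lemma of_jac_mult: "of_jac (a * b) = jmul (of_jac a) (of_jac b)"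
proof
  fix x
  let ?pair = "\<lambda>(m, n). (pair_of_bicyclic m, pair_of_bicyclic n)"
  let ?T = "{(m, n). m \<in> Poly_Mapping.keys a \<and> n \<in> Poly_Mapping.keys b \<and> m + n = bicyclic_of_pair x}"
  have T: "{(m, n). m \<in> jsupp (of_jac a) \<and> n \<in> jsupp (of_jac b) \<and> bmul m n = x} = ?pair ` ?T"
    unfolding jsupp_of_jac
    by (auto simp: image_iff bicyclic_of_pair_bmul[symmetric])
      (metis bicyclic_of_pair_of_bicyclic bicyclic_of_pair_bmul pair_of_bicyclic_of_pair)+
  have inj: "inj_on ?pair ?T"
    by (auto intro!: inj_onI) (metis bicyclic_of_pair_of_bicyclic)+
  have "jmul (of_jac a) (of_jac b) x = (\<Sum>(m, n)\<in>?T. Poly_Mapping.lookup a m * Poly_Mapping.lookup b n)"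
    by (simp add: jmul_def T sum.reindex[OF inj]) (simp add: comp_def case_prod_beta of_jac_def)
  also have "\<dots> = (\<Sum>(m, n)\<in>Poly_Mapping.keys a \<times> Poly_Mapping.keys b.
       if m + n = bicyclic_of_pair x then Poly_Mapping.lookup a m * Poly_Mapping.lookup b n else 0)"
    by (rule sum.mono_neutral_cong_left) (auto split: if_splits)
  finally show "of_jac (a * b) x = jmul (of_jac a) (of_jac b) x"
    by (simp add: of_jac_def lookup_mult_eq_sum_keys sum.cartesian_product)
qed

lemma left_ideal_of_jac_image_iff: "left_ideal (of_jac ` A) \<longleftrightarrow> lideal (A :: 'k::field jacobson set)"
proof
  assume l: "left_ideal (of_jac ` A)"
  show "lideal A" unfolding lideal_def
  proof (intro conjI ballI allI)
    have "of_jac 0 \<in> of_jac ` A" using l by (simp add: left_ideal_def of_jac_0)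
    then show "0 \<in> A" using inj_image_mem_iff[OF inj_of_jac] by blast
  next
    fix a b assume "a \<in> A" "b \<in> A"
    then have "of_jac (a + b) \<in> of_jac ` A" using l by (simp add: left_ideal_def of_jac_add)
    then show "a + b \<in> A" using inj_image_mem_iff[OF inj_of_jac] by blast
  next
    fix r a assume "a \<in> A"
    then have "of_jac (r * a) \<in> of_jac ` A"
      using l of_jac_in_Jcarrier[of r] unfolding left_ideal_def of_jac_mult by blast
    then show "r * a \<in> A" using inj_image_mem_iff[OF inj_of_jac] by blast
  qed
next
  assume l: "lideal A"
  show "left_ideal (of_jac ` A)" unfolding left_ideal_def
  proof (intro conjI ballI)
    show "of_jac ` A \<subseteq> Jcarrier" using of_jac_in_Jcarrier by blast
    show "jzero \<in> of_jac ` A" using lideal_0[OF l] by (force simp flip: of_jac_0)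
  next
    fix a b :: "nat \<times> nat \<Rightarrow> 'k" assume "a \<in> of_jac ` A" "b \<in> of_jac ` A"
    then obtain a' b' where "a' \<in> A" "b' \<in> A" "jadd a b = of_jac (a' + b')"
      by (auto simp: of_jac_add)
    then show "jadd a b \<in> of_jac ` A" using lideal_add[OF l] by blast
  next
    fix r a :: "nat \<times> nat \<Rightarrow> 'k" assume r: "r \<in> Jcarrier" and "a \<in> of_jac ` A"
    then obtain a' where "a' \<in> A" "jmul r a = of_jac (to_jac r * a')"
      by (auto simp: of_jac_mult)
    then show "jmul r a \<in> of_jac ` A" using lideal_mult[OF l] by blast
  qed
qed

lemma principal_left_of_jac: "principal_left (of_jac a) = of_jac ` range (\<lambda>r. r * a)"
proof (intro equalityI subsetI)
  fix z assume "z \<in> principal_left (of_jac a)"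
  then obtain r where "r \<in> Jcarrier" "z = jmul r (of_jac a)" by (auto simp: principal_left_def)
  then have "z = of_jac (to_jac r * a)" by (simp add: of_jac_mult)
  then show "z \<in> of_jac ` range (\<lambda>r. r * a)" by blast
next
  fix z assume "z \<in> of_jac ` range (\<lambda>r. r * a)"
  then obtain r where "z = jmul (of_jac r) (of_jac a)" by (auto simp: of_jac_mult)
  then show "z \<in> principal_left (of_jac a)"
    unfolding principal_left_def using of_jac_in_Jcarrier by blast
qed

lemma of_jac_image_set_plus:
  "of_jac ` {a + b | a b. a \<in> A \<and> b \<in> A'} = {jadd s t | s t. s \<in> of_jac ` A \<and> t \<in> of_jac ` A'}"
proof -
  have "of_jac ` {a + b | a b. a \<in> A \<and> b \<in> A'} = {jadd (of_jac a) (of_jac b) | a b. a \<in> A \<and> b \<in> A'}"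
    by (auto simp flip: of_jac_add)
  also have "\<dots> = {jadd s t | s t. s \<in> of_jac ` A \<and> t \<in> of_jac ` A'}"
    by blast
  finally show ?thesis .
qed

section \<open>Polynomials in \<open>x\<close> and \<open>x\<close>-torsion\<close>

definition jpoly :: "'k::field poly \<Rightarrow> 'k jacobson" where
  "jpoly p = to_jac (poly_in_x p)"

lemma poly_in_x_in_Jcarrier: "poly_in_x p \<in> Jcarrier"
proof -
  have "jsupp (poly_in_x p) \<subseteq> {0} \<times> {..degree p}"
    by (auto simp: jsupp_def poly_in_x_def le_degree split: if_splits)
  then show ?thesis unfolding Jcarrier_def by (auto intro: finite_subset)
qed

lemma of_jac_jpoly: "of_jac (jpoly p) = poly_in_x p"
  by (simp add: jpoly_def poly_in_x_in_Jcarrier)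

lemma lookup_jpoly: "Poly_Mapping.lookup (jpoly p) (B i j) = (if i = 0 then coeff p j else 0)"
  by (simp add: jpoly_def lookup_to_jac[OF poly_in_x_in_Jcarrier]) (simp add: poly_in_x_def)

lemma jpoly_add: "jpoly (p + q) = jpoly p + jpoly q"
  by (rule bicyclic_poly_mapping_eqI) (simp add: lookup_jpoly lookup_add)

lemma jpoly_0 [simp]: "jpoly 0 = 0"
  by (rule bicyclic_poly_mapping_eqI) (simp add: lookup_jpoly)

lemma jpoly_smult: "jpoly (smult a p) = jconst a * jpoly p"
  by (rule bicyclic_poly_mapping_eqI) (simp add: lookup_jpoly lookup_jconst_mult)

lemma jpoly_diff: "jpoly (p - q) = jpoly p - jpoly q"
  by (rule bicyclic_poly_mapping_eqI) (simp add: lookup_jpoly lookup_minus)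

lemma jpoly_monom: "jpoly (monom c n) = jconst c * jx ^ n"
proof -
  have "jpoly (monom c n) = Poly_Mapping.single (B 0 n) c"
    by (rule bicyclic_poly_mapping_eqI) (auto simp: lookup_jpoly lookup_single when_def)
  then show ?thesis by (simp add: jx_power jconst_mult_single)
qed

lemma jpoly_sum: "jpoly (\<Sum>i\<in>A. f i) = (\<Sum>i\<in>A. jpoly (f i))"
  by (induction A rule: infinite_finite_induct) (simp_all add: jpoly_add)

lemma jpoly_eq_sum: "degree p \<le> n \<Longrightarrow> jpoly p = (\<Sum>k\<le>n. jconst (coeff p k) * jx ^ k)"
  by (metis (no_types, lifting) jpoly_monom jpoly_sum poly_as_sum_of_monoms' sum.cong)

lemma jpoly_pCons: "jpoly (pCons a p) = jconst a + jx * jpoly p"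
proof -
  define n where "n = degree p"
  have "jpoly (pCons a p) = (\<Sum>k\<le>Suc n. jconst (coeff (pCons a p) k) * jx ^ k)"
    using jpoly_eq_sum degree_pCons_le n_def by metis
  also have "\<dots> = jconst a + (\<Sum>k\<le>n. jconst (coeff p k) * jx ^ Suc k)"
    by (subst sum.atMost_Suc_shift) (simp del: power_Suc)
  also have "(\<Sum>k\<le>n. jconst (coeff p k) * jx ^ Suc k) = (\<Sum>k\<le>n. jx * (jconst (coeff p k) * jx ^ k))"
    by (simp add: mult.assoc[symmetric] jconst_commute[of _ jx])
  also have "\<dots> = jx * jpoly p"
    using jpoly_eq_sum[of p n] by (simp add: n_def sum_distrib_left)
  finally show ?thesis .
qed

lemma jpoly_mult: "jpoly (p * q) = jpoly p * jpoly q"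
proof (induction p rule: pCons_induct)
  case (pCons a p)
  have "jpoly (pCons a p * q) = jconst a * jpoly q + jx * (jpoly p * jpoly q)"
    by (simp add: jpoly_add jpoly_smult jpoly_pCons pCons.IH)
  also have "\<dots> = jpoly (pCons a p) * jpoly q"
    by (simp add: jpoly_pCons algebra_simps)
  finally show ?case .
qed simp

lemma jpoly_commute: "jpoly p * jpoly q = jpoly q * jpoly p"
  by (metis jpoly_mult mult.commute)

lemma jx_power_mult_jpoly_commute: "jx ^ n * jpoly p = jpoly p * jx ^ n"
  using jpoly_commute[of "monom 1 n" p] by (simp add: jpoly_monom jconst_def)

lemma jpoly_eq_0_iff [simp]: "jpoly p = 0 \<longleftrightarrow> p = 0"
  by (metis jpoly_0 lookup_jpoly lookup_zero poly_eqI coeff_0)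

lemma ex_jx_power_mult_eq_jpoly: "\<exists>N\<ge>N0. \<exists>w. jx ^ N * m = jpoly w"
proof -
  define N where "N = Max (insert N0 (fst ` pair_of_bicyclic ` Poly_Mapping.keys m))"
  have N0: "N0 \<le> N" unfolding N_def by simp
  define w where "w = (\<Sum>k\<in>Poly_Mapping.keys m.
      case k of B i j \<Rightarrow> monom (Poly_Mapping.lookup m k) (j + N - i))"
  have "jx ^ N * m = (\<Sum>k\<in>Poly_Mapping.keys m. jx ^ N * Poly_Mapping.single k (Poly_Mapping.lookup m k))"
    by (subst poly_mapping_sum_single[of m]) (simp add: sum_distrib_left)
  also have "\<dots> = jpoly w"
    unfolding w_def jpoly_sum
  proof (rule sum.cong)
    fix k assume k: "k \<in> Poly_Mapping.keys m"
    obtain i j where kij: "k = B i j" by (cases k)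
    have "i \<in> fst ` pair_of_bicyclic ` Poly_Mapping.keys m" using k kij by force
    then have "i \<le> N" unfolding N_def by (intro Max_ge) auto
    then show "jx ^ N * Poly_Mapping.single k (Poly_Mapping.lookup m k) =
        jpoly (case k of B i j \<Rightarrow> monom (Poly_Mapping.lookup m k) (j + N - i))"
      by (simp add: kij jx_power mult_single jpoly_monom jconst_mult_single)
  qed simp
  finally show ?thesis using N0 by blast
qed

lemma ex_je_mult_eq_je_mult_jpoly: "\<exists>w. je * t = je * jpoly w"
proof -
  have single: "je * Poly_Mapping.single k c =
      je * jpoly (case k of B i j \<Rightarrow> if i = 0 then monom c j else 0)" for k c
  proof -
    obtain i j where k: "k = B i j" by (cases k)
    have "je * Poly_Mapping.single k c = jconst c * ((je * jy ^ i) * jx ^ j)"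
      by (simp only: k single_B_eq mult_jconst_left_commute mult.assoc)
    then show ?thesis
      by (cases "i = 0") (simp_all add: k je_mult_jy_power jpoly_monom mult_jconst_left_commute)
  qed
  have "je * t = (\<Sum>k\<in>Poly_Mapping.keys t. je * Poly_Mapping.single k (Poly_Mapping.lookup t k))"
    by (subst poly_mapping_sum_single[of t]) (simp add: sum_distrib_left)
  also have "\<dots> = je * jpoly (\<Sum>k\<in>Poly_Mapping.keys t.
      case k of B i j \<Rightarrow> if i = 0 then monom (Poly_Mapping.lookup t k) j else 0)"
    by (simp add: single jpoly_sum sum_distrib_left)
  finally show ?thesis by blast
qed

lemma je_jpoly_mult_jy_jx_power:
  assumes "degree p \<le> n"
  shows "je * jpoly p * (jy ^ d * jx ^ d) =
    (\<Sum>k\<le>n. if d \<le> k then jconst (coeff p k) * (je * jx ^ k) else (0::'k::field jacobson))"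
proof -
  have "je * jpoly p * (jy ^ d * jx ^ d) =
      (\<Sum>k\<le>n. jconst (coeff p k) * (je * (jx ^ k * jy ^ d) * jx ^ d))"
    by (simp add: jpoly_eq_sum[OF assms] sum_distrib_left sum_distrib_right
        mult_jconst_left_commute mult.assoc)
  also have "\<dots> = (\<Sum>k\<le>n. if d \<le> k then jconst (coeff p k) * (je * jx ^ k) else 0)"
  proof (rule sum.cong)
    fix k
    show "jconst (coeff p k) * (je * (jx ^ k * jy ^ d) * jx ^ d) =
        (if d \<le> k then jconst (coeff p k) * (je * jx ^ k) else 0)"
    proof (cases "d \<le> k")
      case True
      then have "jx ^ (k - d) * jx ^ d = (jx ^ k :: 'k jacobson)" by (simp flip: power_add)
      then show ?thesis using True by (simp add: jx_power_mult_jy_power_ge mult.assoc)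
    qed (simp add: jx_power_mult_jy_power_le je_mult_jy_power)
  qed simp
  finally show ?thesis .
qed

lemma je_jpoly_mult_jy_jx_power_eq_0_iff:
  "je * jpoly p * (jy ^ d * jx ^ d) = (0::'k::field jacobson) \<longleftrightarrow> p = 0 \<or> degree p < d"
proof
  assume "p = 0 \<or> degree p < d"
  then show "je * jpoly p * (jy ^ d * jx ^ d) = 0"
  proof
    assume "degree p < d"
    then show ?thesis by (simp add: je_jpoly_mult_jy_jx_power[of p "degree p"])
  qed simp
next
  assume zero: "je * jpoly p * (jy ^ d * jx ^ d) = 0"
  show "p = 0 \<or> degree p < d"
  proof (rule ccontr)
    assume "\<not> (p = 0 \<or> degree p < d)"
    then have p: "p \<noteq> 0" and d: "d \<le> degree p" by auto
    have "Poly_Mapping.lookup (je * jpoly p * (jy ^ d * jx ^ d)) (B 0 (degree p))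
        = (\<Sum>k\<le>degree p. if d \<le> k then coeff p k * (if degree p = k then 1 else 0) else 0)"
      by (simp add: je_jpoly_mult_jy_jx_power[of p "degree p"] lookup_sum lookup_jconst_mult
          lookup_je_mult_jx_power if_distrib[of "\<lambda>x. Poly_Mapping.lookup x _"] cong: if_cong)
    also have "\<dots> = (\<Sum>k\<le>degree p. if k = degree p then coeff p (degree p) else 0)"
      by (rule sum.cong) (auto simp: d)
    finally have "coeff p (degree p) = 0" using zero by simp
    then show False using p by simp
  qed
qed

definition x_torsion :: "'k::field jacobson set" where
  "x_torsion = {s. \<exists>N. jx ^ N * s = 0}"

lemma jx_power_mult_eq_0_mono:
  assumes "jx ^ N * s = (0::'k::field jacobson)" and "N \<le> M"
  shows "jx ^ M * s = 0"
proof -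
  have "jx ^ M = (jx ^ (M - N) * jx ^ N :: 'k jacobson)" using assms(2) by (simp flip: power_add)
  then show ?thesis using assms(1) by (simp add: mult.assoc)
qed

lemma x_torsion_add: "a \<in> x_torsion \<Longrightarrow> b \<in> x_torsion \<Longrightarrow> a + b \<in> x_torsion"
proof -
  assume "a \<in> x_torsion" "b \<in> x_torsion"
  then obtain N M where "jx ^ N * a = 0" "jx ^ M * b = 0" by (auto simp: x_torsion_def)
  then have "jx ^ max N M * a = 0" "jx ^ max N M * b = 0" by (auto intro: jx_power_mult_eq_0_mono)
  then have "jx ^ max N M * (a + b) = 0" by (simp add: distrib_left)
  then show ?thesis unfolding x_torsion_def by blast
qed

lemma zero_in_x_torsion: "0 \<in> x_torsion"
  by (auto simp: x_torsion_def)

lemma x_torsion_sum: "(\<And>i. i \<in> I \<Longrightarrow> f i \<in> x_torsion) \<Longrightarrow> sum f I \<in> x_torsion"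
  by (induction I rule: infinite_finite_induct) (simp_all add: zero_in_x_torsion x_torsion_add)

lemma x_torsion_mult_right: "s \<in> x_torsion \<Longrightarrow> s * t \<in> x_torsion"
  unfolding x_torsion_def by auto (metis mult.assoc mult_zero_left)

lemma mult_je_in_x_torsion: "m * je \<in> x_torsion"
proof -
  obtain N w where w: "jx ^ N * m = jpoly w" using ex_jx_power_mult_eq_jpoly[of 0 m] by blast
  have "jx ^ Suc N * (m * je) = jx * (jx ^ N * m) * je" by (simp add: mult.assoc)
  also have "\<dots> = jpoly w * (jx * je)" using jx_power_mult_jpoly_commute[of 1 w] by (simp add: w mult.assoc)
  also have "\<dots> = 0" by (simp add: jx_mult_je)
  finally show ?thesis unfolding x_torsion_def by blast
qed

text \<open>The rows of \<open>s\<close> are the elements \<open>e x\<^sup>i s\<close>.\<close>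

lemma x_torsion_eq_sum_rows:
  assumes "jx ^ N * s = 0"
  shows "s = (\<Sum>i<N. jy ^ i * (je * (jx ^ i * (s::'k::field jacobson))))"
proof -
  have "s = ((\<Sum>i<N. jy ^ i * je * jx ^ i) + jy ^ N * jx ^ N) * s" by (simp add: sum_matrix_units)
  also have "\<dots> = (\<Sum>i<N. jy ^ i * (je * (jx ^ i * s)))"
    using assms by (simp add: distrib_right sum_distrib_right mult.assoc)
  finally show ?thesis .
qed

lemma x_torsion_eq_sum_rows_jpoly:
  assumes "jx ^ N * s = (0::'k::field jacobson)"
  obtains W where "\<And>i. je * (jx ^ i * s) = je * jpoly (W i)"
    and "s = (\<Sum>i<N. jy ^ i * (je * jpoly (W i)))"
proof -
  have "\<forall>i. \<exists>w. je * (jx ^ i * s) = je * jpoly w" using ex_je_mult_eq_je_mult_jpoly by blast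
  then obtain W where W: "\<And>i. je * (jx ^ i * s) = je * jpoly (W i)" by (auto dest: choice)
  show thesis using that[OF W] x_torsion_eq_sum_rows[OF assms] by (simp add: W)
qed

section \<open>The socle\<close>

definition socle_summand :: "nat \<Rightarrow> 'k::field jacobson set" where
  "socle_summand k = range (\<lambda>r. r * (je * jx ^ k))"

lemma lideal_socle_summand: "lideal (socle_summand k :: 'k::field jacobson set)"
  unfolding lideal_def socle_summand_def
proof (intro conjI ballI allI)
  show "0 \<in> range (\<lambda>r. r * (je * jx ^ k))" by (metis mult_zero_left rangeI)
next
  fix a b :: "'k jacobson" assume "a \<in> range (\<lambda>r. r * (je * jx ^ k))" "b \<in> range (\<lambda>r. r * (je * jx ^ k))"
  then show "a + b \<in> range (\<lambda>r. r * (je * jx ^ k))" by (auto simp flip: distrib_right)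
next
  fix r a :: "'k jacobson" assume "a \<in> range (\<lambda>r. r * (je * jx ^ k))"
  then show "r * a \<in> range (\<lambda>r. r * (je * jx ^ k))" by (auto simp flip: mult.assoc)
qed

text \<open>The minimality of \<open>R e x\<^sup>k\<close> comes from \<open>e R e = K e\<close>: any nonzero \<open>r e\<close> has a row
  \<open>e x\<^sup>i r e = c e\<close> with \<open>c \<noteq> 0\<close>.\<close>

lemma socle_summand_minimal:
  assumes L: "lideal L" and sub: "L \<subseteq> socle_summand k" and nz: "L \<noteq> {0}"
  shows "L = socle_summand k"
proof -
  obtain t where "t \<in> L" and "t \<noteq> 0" using nz lideal_0[OF L] by blast
  then obtain r where rL: "r * (je * jx ^ k) \<in> L" and r: "r * (je * jx ^ k) \<noteq> 0"
    using sub unfolding socle_summand_def by auto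
  have rE: "r * je \<noteq> 0" using r by (metis mult.assoc mult_zero_left)
  obtain N where N: "jx ^ N * (r * je) = 0" using mult_je_in_x_torsion[of r] unfolding x_torsion_def by blast
  have "\<exists>i. je * (jx ^ i * r) * je \<noteq> 0"
  proof (rule ccontr)
    assume "\<not> ?thesis"
    then have "jy ^ i * (je * (jx ^ i * (r * je))) = 0" for i by (simp add: mult.assoc)
    then show False using x_torsion_eq_sum_rows[OF N] rE by simp
  qed
  then obtain i where i: "je * (jx ^ i * r) * je \<noteq> 0" by blast
  define c where "c = Poly_Mapping.lookup (jx ^ i * r) 0"
  have Ec: "je * (jx ^ i * r) * je = jconst c * je" using je_mult_je c_def by blast
  then have "c \<noteq> 0" using i by auto
  have "(jconst (1 / c) * je * jx ^ i) * (r * (je * jx ^ k)) =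
      jconst (1 / c) * (je * (jx ^ i * r) * je) * jx ^ k"
    by (simp add: mult.assoc)
  also have "\<dots> = jconst (1 / c) * (jconst c * je) * jx ^ k" by (simp only: Ec)
  also have "\<dots> = je * jx ^ k"
    using \<open>c \<noteq> 0\<close> by (simp add: mult.assoc[symmetric] jconst_mult)
  finally have "je * jx ^ k \<in> L" using lideal_mult[OF L rL] by metis
  then have "socle_summand k \<subseteq> L" unfolding socle_summand_def by (auto intro: lideal_mult[OF L])
  then show ?thesis using sub by blast
qed

lemma x_torsion_subset_lideal:
  fixes J :: "'k::field jacobson set"
  assumes J: "lideal J" and summands: "\<And>k. socle_summand k \<subseteq> J"
  shows "x_torsion \<subseteq> J"
proof
  fix s :: "'k jacobson" assume "s \<in> x_torsion"
  then obtain N where N: "jx ^ N * s = 0" unfolding x_torsion_def by blast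
  obtain W where s: "s = (\<Sum>i<N. jy ^ i * (je * jpoly (W i)))"
    using x_torsion_eq_sum_rows_jpoly[OF N] by blast
  have "jy ^ i * (je * jpoly w) \<in> J" for i w
  proof -
    have "jy ^ i * (je * jpoly w) = (\<Sum>k\<le>degree w. (jconst (coeff w k) * jy ^ i) * (je * jx ^ k))"
      by (simp add: jpoly_eq_sum[of w "degree w"] sum_distrib_left mult_jconst_left_commute mult.assoc)
    also have "\<dots> \<in> J"
      using summands unfolding socle_summand_def by (intro lideal_sum[OF J]) blast
    finally show ?thesis .
  qed
  then show "s \<in> J" unfolding s by (intro lideal_sum[OF J])
qed

lemma minimal_left_ideal_socle_summand:
  "minimal_left_ideal (of_jac ` socle_summand k :: (nat \<times> nat \<Rightarrow> 'k::field) set)"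
  unfolding minimal_left_ideal_def
proof (intro conjI allI impI)
  show "left_ideal (of_jac ` socle_summand k)"
    using lideal_socle_summand left_ideal_of_jac_image_iff by blast
  have "je * jx ^ k \<in> socle_summand k" unfolding socle_summand_def by (metis mult_1 rangeI)
  moreover have "of_jac (je * jx ^ k) \<noteq> jzero"
    using je_mult_jx_power_neq_0 by (simp add: inj_eq[OF inj_of_jac] flip: of_jac_0)
  ultimately show "of_jac ` socle_summand k \<noteq> {jzero}" by blast
next
  fix L :: "(nat \<times> nat \<Rightarrow> 'k) set"
  assume L: "left_ideal L \<and> L \<subseteq> of_jac ` socle_summand k"
  then have L_eq: "L = of_jac ` to_jac ` L" by (simp add: left_ideal_def of_jac_image_to_jac_image)
  then have "lideal (to_jac ` L)" using L left_ideal_of_jac_image_iff by metis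
  moreover have "to_jac ` L \<subseteq> socle_summand k" using L by auto
  ultimately have "to_jac ` L = {0} \<or> to_jac ` L = socle_summand k"
    using socle_summand_minimal by blast
  then show "L = {jzero} \<or> L = of_jac ` socle_summand k"
    using L_eq by (auto simp: of_jac_0)
qed

lemma of_jac_x_torsion_subset_jsocle: "of_jac ` x_torsion \<subseteq> (jsocle :: (nat \<times> nat \<Rightarrow> 'k::field) set)"
  unfolding jsocle_def
proof (rule Inter_greatest)
  fix J :: "(nat \<times> nat \<Rightarrow> 'k) set"
  assume "J \<in> {J. left_ideal J \<and> (\<forall>L. minimal_left_ideal L \<longrightarrow> L \<subseteq> J)}"
  then have J: "left_ideal J" "\<And>k. of_jac ` socle_summand k \<subseteq> J"
    using minimal_left_ideal_socle_summand by blast+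
  then have J_eq: "J = of_jac ` to_jac ` J" by (simp add: left_ideal_def of_jac_image_to_jac_image)
  have "x_torsion \<subseteq> to_jac ` J"
  proof (rule x_torsion_subset_lideal)
    show "lideal (to_jac ` J)" using J(1) J_eq left_ideal_of_jac_image_iff by metis
    show "socle_summand k \<subseteq> to_jac ` J" for k
    proof
      fix m :: "'k jacobson" assume "m \<in> socle_summand k"
      then have "of_jac m \<in> J" using J(2) by blast
      then show "m \<in> to_jac ` J" by (metis to_jac_of_jac image_eqI)
    qed
  qed
  then show "of_jac ` x_torsion \<subseteq> J" using J_eq by blast
qed

section \<open>Decomposition of a left ideal\<close>

lemma lideal_subset_x_torsion:
  assumes L: "lideal L" and no_poly: "\<And>p. jpoly p \<in> L \<Longrightarrow> p = 0"
  shows "L \<subseteq> x_torsion"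
proof
  fix f assume f: "f \<in> L"
  obtain N w where w: "jx ^ N * f = jpoly w" using ex_jx_power_mult_eq_jpoly[of 0 f] by blast
  then have "w = 0" using no_poly lideal_mult[OF L f] by metis
  then show "f \<in> x_torsion" using w unfolding x_torsion_def by auto
qed

lemma lideal_ex_poly_generator:
  assumes L: "lideal L" and "p0 \<noteq> 0" and "jpoly p0 \<in> L"
  obtains q where "q \<noteq> 0" and "jpoly q \<in> L" and "\<And>p. jpoly p \<in> L \<Longrightarrow> q dvd p"
proof -
  obtain q where q: "q \<noteq> 0" "jpoly q \<in> L"
    and least: "\<And>p. p \<noteq> 0 \<Longrightarrow> jpoly p \<in> L \<Longrightarrow> degree q \<le> degree p"
    using ex_has_least_nat[of "\<lambda>p. p \<noteq> 0 \<and> jpoly p \<in> L" p0 degree] assms by blast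
  have "q dvd p" if p: "jpoly p \<in> L" for p
  proof (rule ccontr)
    assume "\<not> q dvd p"
    then have "p mod q \<noteq> 0" by (simp add: dvd_eq_mod_eq_0)
    moreover have "jpoly (p mod q) = jpoly p - jpoly (p div q) * jpoly q"
      by (simp add: jpoly_diff jpoly_mult flip: minus_div_mult_eq_mod)
    then have "jpoly (p mod q) \<in> L" using lideal_diff[OF L p lideal_mult[OF L q(2)]] by simp
    ultimately have "degree q \<le> degree (p mod q)" using least by blast
    moreover have "degree (p mod q) < degree q" using degree_mod_less' q(1) \<open>p mod q \<noteq> 0\<close> by blast
    ultimately show False by simp
  qed
  then show thesis using that q by blast
qed

definition annihilated_part :: "'k::field jacobson set \<Rightarrow> nat \<Rightarrow> 'k jacobson set" where
  "annihilated_part L d = {s \<in> L. s * (jy ^ d * jx ^ d) = 0}"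

lemma lideal_annihilated_part:
  assumes L: "lideal L"
  shows "lideal (annihilated_part L d)"
  unfolding lideal_def
proof (intro conjI ballI allI)
  show "0 \<in> annihilated_part L d" using lideal_0[OF L] by (simp add: annihilated_part_def)
next
  fix a b assume "a \<in> annihilated_part L d" "b \<in> annihilated_part L d"
  then show "a + b \<in> annihilated_part L d"
    using lideal_add[OF L] by (simp add: annihilated_part_def distrib_right)
next
  fix r a assume "a \<in> annihilated_part L d"
  then show "r * a \<in> annihilated_part L d"
    using lideal_mult[OF L] by (simp add: annihilated_part_def mult.assoc)
qed

lemma x_torsion_if_mult_jy_jx_power_eq_0:
  assumes "s * (jy ^ d * jx ^ d) = (0::'k::field jacobson)"
  shows "s \<in> x_torsion"
proof -
  have "s = s * ((\<Sum>i<d. jy ^ i * je * jx ^ i) + jy ^ d * jx ^ d)"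
    by (simp add: sum_matrix_units)
  also have "\<dots> = (\<Sum>i<d. s * jy ^ i * je * jx ^ i)"
    using assms by (simp add: distrib_left sum_distrib_left mult.assoc)
  also have "\<dots> \<in> x_torsion"
    by (intro x_torsion_sum) (rule x_torsion_mult_right, rule mult_je_in_x_torsion)
  finally show ?thesis .
qed

text \<open>If \<open>r q(x) y\<^sup>d x\<^sup>d = 0\<close> with \<open>d = deg q\<close>, then \<open>r\<close> is \<open>x\<close>-torsion (as \<open>K[x]\<close> has no zero
  divisors) and each of its rows \<open>e v(x)\<close> satisfies \<open>e v(x) q(x) y\<^sup>d x\<^sup>d = 0\<close>, forcing \<open>v = 0\<close>.\<close>

lemma eq_0_if_mult_jpoly_mult_jy_jx_power_eq_0:
  assumes q: "q \<noteq> 0" and tU: "r * jpoly q * (jy ^ degree q * jx ^ degree q) = (0::'k::field jacobson)"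
  shows "r = 0"
proof -
  obtain N1 where N1: "jx ^ N1 * (r * jpoly q) = 0"
    using x_torsion_if_mult_jy_jx_power_eq_0[OF tU] unfolding x_torsion_def by blast
  obtain N w where N: "N \<ge> N1" "jx ^ N * r = jpoly w" using ex_jx_power_mult_eq_jpoly[of N1 r] by blast
  have "jpoly (w * q) = 0"
    using jx_power_mult_eq_0_mono[OF N1 N(1)] by (simp add: jpoly_mult N(2) flip: mult.assoc)
  then have "jx ^ N * r = 0" using q N(2) by simp
  then obtain V where V: "\<And>i. je * (jx ^ i * r) = je * jpoly (V i)"
    and r: "r = (\<Sum>i<N. jy ^ i * (je * jpoly (V i)))"
    using x_torsion_eq_sum_rows_jpoly by blast
  have "V i = 0" for i
  proof -
    have "je * jpoly (V i * q) * (jy ^ degree q * jx ^ degree q) =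
        je * jpoly (V i) * jpoly q * (jy ^ degree q * jx ^ degree q)"
      by (simp add: jpoly_mult mult.assoc)
    also have "\<dots> = je * (jx ^ i * r) * jpoly q * (jy ^ degree q * jx ^ degree q)"
      by (simp only: V)
    also have "\<dots> = (je * jx ^ i) * (r * jpoly q * (jy ^ degree q * jx ^ degree q))"
      by (simp add: mult.assoc)
    also have "\<dots> = 0" by (simp add: tU)
    finally have "V i * q = 0 \<or> degree (V i * q) < degree q"
      by (simp only: je_jpoly_mult_jy_jx_power_eq_0_iff)
    then show ?thesis using q by (cases "V i = 0") (auto simp: degree_mult_eq)
  qed
  then show "r = 0" using r by simp
qed

lemma annihilated_part_subset_x_torsion: "annihilated_part L d \<subseteq> x_torsion"
  by (auto simp: annihilated_part_def intro: x_torsion_if_mult_jy_jx_power_eq_0)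

text \<open>Subtracting \<open>y\<^sup>N g(x) q(x)\<close>, where \<open>x\<^sup>N f = g q\<close>, reduces \<open>f\<close> to an \<open>x\<close>-torsion element of \<open>L\<close>,
  whose rows are then divided by \<open>q\<close>.\<close>

lemma annihilated_part_plus_principal:
  assumes L: "lideal L" and q: "q \<noteq> 0" "jpoly q \<in> L" and q_dvd: "\<And>p. jpoly p \<in> L \<Longrightarrow> q dvd p"
    and f: "f \<in> L"
  shows "\<exists>s r. s \<in> annihilated_part L (degree q) \<and> f = s + r * jpoly q"
proof -
  obtain N w where w: "jx ^ N * f = jpoly w" using ex_jx_power_mult_eq_jpoly[of 0 f] by blast
  then obtain g where g: "w = q * g" using q_dvd lideal_mult[OF L f] by (metis dvdE)
  define t where "t = f - (jy ^ N * jpoly g) * jpoly q"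
  have tL: "t \<in> L" unfolding t_def using lideal_diff[OF L f lideal_mult[OF L q(2)]] .
  have "jx ^ N * t = jx ^ N * f - (jx ^ N * jy ^ N) * jpoly g * jpoly q"
    by (simp add: t_def right_diff_distrib mult.assoc)
  then have "jx ^ N * t = 0" by (simp add: w jx_power_mult_jy_power g jpoly_mult jpoly_commute)
  then obtain W where W: "\<And>i. je * (jx ^ i * t) = je * jpoly (W i)"
    and t: "t = (\<Sum>i<N. jy ^ i * (je * jpoly (W i)))"
    using x_torsion_eq_sum_rows_jpoly by blast
  define s where "s = (\<Sum>i<N. jy ^ i * (je * jpoly (W i mod q)))"
  define r where "r = (\<Sum>i<N. jy ^ i * (je * jpoly (W i div q)))"
  have jpoly_W: "jpoly (W i) = jpoly (W i div q) * jpoly q + jpoly (W i mod q)" for i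
    by (simp flip: jpoly_mult jpoly_add)
  have "t = s + r * jpoly q"
    unfolding t s_def r_def sum_distrib_right sum.distrib[symmetric]
    by (rule sum.cong) (simp_all add: jpoly_W algebra_simps)
  then have f_eq: "f = s + (jy ^ N * jpoly g + r) * jpoly q"
    by (simp add: t_def algebra_simps)
  have "je * jpoly (W i mod q) \<in> L" for i
  proof -
    have "je * jpoly (W i) \<in> L" using lideal_mult[OF L tL, of "je * jx ^ i"] W by (simp add: mult.assoc)
    moreover have "je * jpoly (W i mod q) = je * jpoly (W i) - (je * jpoly (W i div q)) * jpoly q"
      by (simp add: jpoly_W algebra_simps)
    ultimately show ?thesis using lideal_diff[OF L _ lideal_mult[OF L q(2)]] by simp
  qed
  then have "s \<in> L" unfolding s_def by (intro lideal_sum[OF L]) (simp add: lideal_mult[OF L])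
  moreover have "je * jpoly (W i mod q) * (jy ^ degree q * jx ^ degree q) = 0" for i
    using degree_mod_less'[OF q(1)] by (auto simp: je_jpoly_mult_jy_jx_power_eq_0_iff)
  then have "s * (jy ^ degree q * jx ^ degree q) = 0"
    by (simp add: s_def sum_distrib_right mult.assoc)
  ultimately show ?thesis using f_eq unfolding annihilated_part_def by blast
qed

lemma annihilated_part_inter_principal:
  assumes "lideal L" and "q \<noteq> 0"
  shows "annihilated_part L (degree q) \<inter> range (\<lambda>r. r * jpoly q) = {0}"
proof -
  have "r * jpoly q = 0" if "r * jpoly q \<in> annihilated_part L (degree q)" for r
    using that eq_0_if_mult_jpoly_mult_jy_jx_power_eq_0[OF \<open>q \<noteq> 0\<close>, of r]
    by (simp add: annihilated_part_def)
  moreover have "0 \<in> annihilated_part L (degree q)"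
    using lideal_0 lideal_annihilated_part assms(1) by blast
  ultimately show ?thesis by (auto intro: range_eqI[of _ _ 0])
qed

theorem jacobson_lideal_decomposition:
  assumes L: "lideal L"
  obtains S q where "lideal S" and "S \<subseteq> x_torsion"
    and "L = {s + t | s t. s \<in> S \<and> t \<in> range (\<lambda>r. r * jpoly q)}"
    and "S \<inter> range (\<lambda>r. r * jpoly q) = {0}"
proof (cases "\<exists>p. p \<noteq> 0 \<and> jpoly p \<in> L")
  case False
  then have "L \<subseteq> x_torsion" using lideal_subset_x_torsion[OF L] by blast
  moreover have "L = {s + t | s t. s \<in> L \<and> t \<in> range (\<lambda>r. r * jpoly 0)}" by auto
  moreover have "L \<inter> range (\<lambda>r. r * jpoly 0) = {0}" using lideal_0[OF L] by auto
  ultimately show thesis using that L by blast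
next
  case True
  then obtain q where q: "q \<noteq> 0" "jpoly q \<in> L" and q_dvd: "\<And>p. jpoly p \<in> L \<Longrightarrow> q dvd p"
    using lideal_ex_poly_generator[OF L] by metis
  let ?S = "annihilated_part L (degree q)"
  have "L = {s + t | s t. s \<in> ?S \<and> t \<in> range (\<lambda>r. r * jpoly q)}"
  proof (intro equalityI subsetI)
    fix f assume "f \<in> L"
    then show "f \<in> {s + t | s t. s \<in> ?S \<and> t \<in> range (\<lambda>r. r * jpoly q)}"
      using annihilated_part_plus_principal[OF L q q_dvd] by blast
  next
    fix f assume "f \<in> {s + t | s t. s \<in> ?S \<and> t \<in> range (\<lambda>r. r * jpoly q)}"
    then show "f \<in> L"
      using lideal_add[OF L] lideal_mult[OF L q(2)] by (auto simp: annihilated_part_def)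
  qed
  then show thesis
    using that lideal_annihilated_part[OF L] annihilated_part_subset_x_torsion
      annihilated_part_inter_principal[OF L q(1)] by blast
qed

theorem theorem2:
  fixes L :: "(nat \<times> nat \<Rightarrow> 'k::field) set"
  assumes "left_ideal L"
  shows "\<exists>S p. left_ideal S \<and> S \<subseteq> jsocle \<and>
           L = {jadd s t | s t. s \<in> S \<and> t \<in> principal_left (poly_in_x p)} \<and>
           S \<inter> principal_left (poly_in_x p) = {jzero}"
proof -
  have L: "L = of_jac ` to_jac ` L"
    using assms by (simp add: left_ideal_def of_jac_image_to_jac_image)
  then have "lideal (to_jac ` L)" using assms left_ideal_of_jac_image_iff by metis
  then obtain S q where S: "lideal S" "S \<subseteq> x_torsion"
    and L_sum: "to_jac ` L = {s + t | s t. s \<in> S \<and> t \<in> range (\<lambda>r. r * jpoly q)}"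
    and direct: "S \<inter> range (\<lambda>r. r * jpoly q) = {0}"
    by (rule jacobson_lideal_decomposition)
  have P: "principal_left (poly_in_x q) = of_jac ` range (\<lambda>r. r * jpoly q)"
    by (simp add: principal_left_of_jac flip: of_jac_jpoly)
  have "left_ideal (of_jac ` S)" using S(1) left_ideal_of_jac_image_iff by blast
  moreover have "of_jac ` S \<subseteq> jsocle" using S(2) of_jac_x_torsion_subset_jsocle by blast
  moreover have "L = {jadd s t | s t. s \<in> of_jac ` S \<and> t \<in> principal_left (poly_in_x q)}"
    by (subst L) (simp add: L_sum P of_jac_image_set_plus)
  moreover have "of_jac ` S \<inter> principal_left (poly_in_x q) = {jzero}"
    using direct by (simp add: P of_jac_0 flip: image_Int[OF inj_of_jac])
  ultimately show ?thesis by blast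
qed

end
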